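(* Let $f,g,h$ be smooth real functions of one variable satisfying $f\neq 0$, $g\neq 0$, $g'\neq 0$ (where $'$ denotes $d/du$), and consider the generalized Kudryashov–Sinelshchikov equation $$\mathfrak{F}:=u_t-f(u)u_x-g(u)u_{xx}+h(u)u_x^2=0$$ for $u=u(t,x)$. Then this equation is nonlinearly self-adjoint. Moreover, writing $E(u):=\exp\left(-\int \frac{g'(u)+h(u)}{g(u)}\,du\right)$: (i) If $f(u)=a\,g(u)+b$ with constants $a,b$, and $f$ itself is not a constant, then the substitution is given by $$\phi(t,x,u)=\big(c_1\exp(ax+abt)+c_2\big)E(u).$$ (ii) If $f(u)=b$ is a constant, then the substitution is given by $$\phi(t,x,u)=\big(c_3(x+bt)+c_4\big)E(u).$$ (iii) In all remaining cases, the substitution is $\phi(u)=c_5\,E(u)$. Here $c_1,\dots,c_5$ are constants with $(c_1,c_2)\neq(0,0)$, $(c_3,c_4)\neq(0,0)$, $c_5\neq 0$.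
   Context: For a differential equation $\mathfrak{F}[u]=0$ in independent variables $t,x$ and dependent variable $u$, introduce a new dependent variable $\nu=\nu(t,x)$ (the adjoint variable). The formal Lagrangian is $\mathfrak{L}=\nu\mathfrak{F}$, and the adjoint differential function is $\mathfrak{F}^*=\frac{\delta\mathfrak{L}}{\delta u}$, where for a second-order $\mathfrak{F}$ the Euler operator is $\frac{\delta}{\delta u}=\frac{\partial}{\partial u}-D_t\frac{\partial}{\partial u_t}-D_x\frac{\partial}{\partial u_x}+D_x^2\frac{\partial}{\partial u_{xx}}$ (plus the corresponding mixed/other second-derivative terms if present), with $D_t,D_x$ the total derivative operators. The equation $\mathfrak{F}=0$ is called nonlinearly self-adjoint if there is a substitution $\nu=\phi(t,x,u)\neq 0$ (with derivatives of $\nu$ replaced by the corresponding total derivatives of $\phi$) such that $\mathfrak{F}^*|_{\nu=\phi(t,x,u)}=\lambda\mathfrak{F}$ for some coefficient $\lambda=\lambda(t,x,u,\dots)$. If $\phi$ depends only on $u$, the equation is called quasi self-adjoint; if $\phi=u$ works, it is called strictly self-adjoint. The antiderivative in $E(u)$ is any fixed antiderivative. *)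

theory Defs
  imports "HOL-Analysis.Analysis"
begin

(* C^infinity: every iterated directional (Frechet) derivative exists and is
   Frechet differentiable everywhere. *)
definition iter_dir_deriv :: "'a::real_normed_vector list \<Rightarrow> ('a \<Rightarrow> real) \<Rightarrow> 'a \<Rightarrow> real" where
  "iter_dir_deriv ds v = foldr (\<lambda>d w. \<lambda>q. frechet_derivative w (at q) d) ds v"

definition smooth_fun :: "('a::real_normed_vector \<Rightarrow> real) \<Rightarrow> bool" where
  "smooth_fun v \<longleftrightarrow> (\<forall>ds p. iter_dir_deriv ds v differentiable (at p))"

(* partial derivatives of a function of (t,x): True = d/dt, False = d/dx *)
definition pd :: "bool \<Rightarrow> (real \<times> real \<Rightarrow> real) \<Rightarrow> real \<times> real \<Rightarrow> real" where
  "pd b v = (\<lambda>p. if b then deriv (\<lambda>s. v (s, snd p)) (fst p)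
                       else deriv (\<lambda>s. v (fst p, s)) (snd p))"

definition jet :: "(real \<times> real \<Rightarrow> real) \<Rightarrow> real \<times> real \<Rightarrow> (bool list \<Rightarrow> real)" where
  "jet u p = (\<lambda>ds. foldr pd ds u p)"

(* second-order jet coordinates used for differential functions / Lagrangians:
   0:t 1:x 2:u 3:u_t 4:u_x 5:u_tt 6:u_tx 7:u_xx 8:nu *)
definition jet2 :: "(real \<times> real \<Rightarrow> real) \<Rightarrow> (real \<times> real \<Rightarrow> real) \<Rightarrow> real \<times> real \<Rightarrow> nat \<Rightarrow> real" where
  "jet2 u \<nu> p = (\<lambda>k. if k = 0 then fst p else if k = 1 then snd p else if k = 2 then u p
      else if k = 3 then pd True u p else if k = 4 then pd False u p
      else if k = 5 then pd True (pd True u) p else if k = 6 then pd True (pd False u) p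
      else if k = 7 then pd False (pd False u) p else if k = 8 then \<nu> p else 0)"

definition pdj :: "nat \<Rightarrow> ((nat \<Rightarrow> real) \<Rightarrow> real) \<Rightarrow> (nat \<Rightarrow> real) \<Rightarrow> real" where
  "pdj k L z = deriv (\<lambda>s. L (z(k := s))) (z k)"

(* Euler operator delta/delta u applied to a second-order Lagrangian L, evaluated
   along u(t,x), nu(t,x); total derivatives along the prolongation are the
   partial derivatives of the composite functions. *)
definition euler_u :: "((nat \<Rightarrow> real) \<Rightarrow> real) \<Rightarrow> (real \<times> real \<Rightarrow> real) \<Rightarrow> (real \<times> real \<Rightarrow> real) \<Rightarrow> real \<times> real \<Rightarrow> real" where
  "euler_u L u \<nu> p =
     pdj 2 L (jet2 u \<nu> p)
     - pd True (\<lambda>q. pdj 3 L (jet2 u \<nu> q)) p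
     - pd False (\<lambda>q. pdj 4 L (jet2 u \<nu> q)) p
     + pd True (pd True (\<lambda>q. pdj 5 L (jet2 u \<nu> q))) p
     + pd True (pd False (\<lambda>q. pdj 6 L (jet2 u \<nu> q))) p
     + pd False (pd False (\<lambda>q. pdj 7 L (jet2 u \<nu> q))) p"

definition KS :: "(real \<Rightarrow> real) \<Rightarrow> (real \<Rightarrow> real) \<Rightarrow> (real \<Rightarrow> real) \<Rightarrow> (nat \<Rightarrow> real) \<Rightarrow> real" where
  "KS f g h z = z 3 - f (z 2) * z 4 - g (z 2) * z 7 + h (z 2) * (z 4)\<^sup>2"

definition KS_lag :: "(real \<Rightarrow> real) \<Rightarrow> (real \<Rightarrow> real) \<Rightarrow> (real \<Rightarrow> real) \<Rightarrow> (nat \<Rightarrow> real) \<Rightarrow> real" where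
  "KS_lag f g h z = z 8 * KS f g h z"

(* phi(t,x,u) is an admissible substitution: smooth, not identically zero, and
   F^*|_{nu = phi} = lambda F for a coefficient lambda depending on t, x and the
   jet of u (identity required along every smooth u). *)
definition KS_subst :: "(real \<Rightarrow> real) \<Rightarrow> (real \<Rightarrow> real) \<Rightarrow> (real \<Rightarrow> real) \<Rightarrow> (real \<Rightarrow> real \<Rightarrow> real \<Rightarrow> real) \<Rightarrow> bool" where
  "KS_subst f g h \<phi> \<longleftrightarrow>
     smooth_fun (\<lambda>(t, x, w). \<phi> t x w) \<and> \<phi> \<noteq> (\<lambda>t x w. 0) \<and>
     (\<exists>\<Lambda> :: real \<Rightarrow> real \<Rightarrow> (bool list \<Rightarrow> real) \<Rightarrow> real.
        \<forall>u. smooth_fun u \<longrightarrow> (\<forall>p.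
          euler_u (KS_lag f g h) u (\<lambda>q. \<phi> (fst q) (snd q) (u q)) p
            = \<Lambda> (fst p) (snd p) (jet u p) * KS f g h (jet2 u (\<lambda>q. \<phi> (fst q) (snd q) (u q)) p)))"

definition KS_nonlin_self_adjoint :: "(real \<Rightarrow> real) \<Rightarrow> (real \<Rightarrow> real) \<Rightarrow> (real \<Rightarrow> real) \<Rightarrow> bool" where
  "KS_nonlin_self_adjoint f g h \<longleftrightarrow> (\<exists>\<phi>. KS_subst f g h \<phi>)"

end

theory Submission
  imports Defs
begin

(*
  Substituting nu = phi(t, x, u) into F* and evaluating along the test functions
  u = w + c (x' - x)^2 + 2 c g(w) (t' - t), which solve F = 0 at (t, x) while u_xx = 2c is arbitrary,
  gives g phi_u = -(g' + h) phi and phi_t = f(w) phi_x - g(w) phi_xx for all t, x, w.  The first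
  equation separates phi = psi(t, x) E(u) with E = exp(-P); the second says that psi solves
  psi_t = f(w) psi_x - g(w) psi_xx for every value w.  As g is not constant, this forces
  psi_xx = a psi_x and psi_t = b psi_x if f = a g + b, and psi_t = psi_x = 0 otherwise, whose
  solutions are travelling waves psi = Y(x + b t) with Y'' = a Y'.  Conversely, for every such psi
  one computes F*|_(nu = psi E(u)) = -psi E'(u) F.
*)

lemma iter_dir_deriv_Nil [simp]: "iter_dir_deriv [] v = v"
  by (simp add: iter_dir_deriv_def)

lemma iter_dir_deriv_snoc:
  "iter_dir_deriv (ds @ [d]) v = iter_dir_deriv ds (\<lambda>q. frechet_derivative v (at q) d)"
  by (simp add: iter_dir_deriv_def)

lemma smooth_fun_iff:
  "smooth_fun v \<longleftrightarrow>
     (\<forall>p. v differentiable (at p)) \<and> (\<forall>d. smooth_fun (\<lambda>q. frechet_derivative v (at q) d))"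
proof
  assume "smooth_fun v"
  then show "(\<forall>p. v differentiable (at p)) \<and> (\<forall>d. smooth_fun (\<lambda>q. frechet_derivative v (at q) d))"
    unfolding smooth_fun_def by (metis iter_dir_deriv_Nil iter_dir_deriv_snoc)
next
  assume v: "(\<forall>p. v differentiable (at p)) \<and> (\<forall>d. smooth_fun (\<lambda>q. frechet_derivative v (at q) d))"
  show "smooth_fun v"
    unfolding smooth_fun_def
  proof (intro allI)
    fix ds p
    show "iter_dir_deriv ds v differentiable at p"
      using v by (cases ds rule: rev_exhaust) (simp_all add: smooth_fun_def iter_dir_deriv_snoc)
  qed
qed

lemma smooth_fun_coinduct:
  assumes "S v"
    and "\<And>v. S v \<Longrightarrow> (\<forall>p. v differentiable (at p)) \<and> (\<forall>d. S (\<lambda>q. frechet_derivative v (at q) d))"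
  shows "smooth_fun v"
proof -
  have "\<forall>v. S v \<longrightarrow> (\<forall>p. iter_dir_deriv ds v differentiable (at p))" for ds
    by (induction ds rule: rev_induct) (use assms(2) in \<open>simp_all add: iter_dir_deriv_snoc\<close>)
  then show ?thesis
    using assms(1) unfolding smooth_fun_def by blast
qed

lemma smooth_fun_differentiable: "smooth_fun v \<Longrightarrow> v differentiable (at p)"
  using smooth_fun_iff by blast

lemma smooth_fun_frechet_derivative:
  "smooth_fun v \<Longrightarrow> smooth_fun (\<lambda>q. frechet_derivative v (at q) d)"
  using smooth_fun_iff by blast

lemma frechet_derivative_eqI: "(f has_derivative f') (at x) \<Longrightarrow> frechet_derivative f (at x) d = f' d"
  by (metis frechet_derivative_at)

lemma frechet_derivative_real:
  fixes F :: "real \<Rightarrow> real"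
  assumes "F differentiable (at x)"
  shows "frechet_derivative F (at x) d = deriv F x * d"
  using assms DERIV_deriv_iff_real_differentiable
  by (intro frechet_derivative_eqI) (auto simp: has_field_derivative_def)

lemma smooth_fun_real_DERIV:
  fixes F :: "real \<Rightarrow> real"
  assumes "smooth_fun F"
  shows "(F has_real_derivative deriv F x) (at x)"
  using assms smooth_fun_differentiable DERIV_deriv_iff_real_differentiable by blast

lemma smooth_fun_deriv:
  fixes F :: "real \<Rightarrow> real"
  assumes "smooth_fun F"
  shows "smooth_fun (deriv F)"
proof -
  have "(\<lambda>q. frechet_derivative F (at q) 1) = deriv F"
    using frechet_derivative_real smooth_fun_differentiable[OF assms] by auto
  then show ?thesis
    using smooth_fun_frechet_derivative[OF assms, of 1] by simp
qed

(* All closure properties of smooth_fun at once: every member of this set is smooth,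
   by a single coinduction. *)

inductive_set smooth_closure :: "('a::real_normed_vector \<Rightarrow> real) set" where
  smooth: "smooth_fun v \<Longrightarrow> v \<in> smooth_closure"
| const: "(\<lambda>q. c) \<in> smooth_closure"
| linear: "bounded_linear l \<Longrightarrow> l \<in> smooth_closure"
| add: "u \<in> smooth_closure \<Longrightarrow> v \<in> smooth_closure \<Longrightarrow> (\<lambda>q. u q + v q) \<in> smooth_closure"
| mult: "u \<in> smooth_closure \<Longrightarrow> v \<in> smooth_closure \<Longrightarrow> (\<lambda>q. u q * v q) \<in> smooth_closure"
| compose: "smooth_fun (F :: real \<Rightarrow> real) \<Longrightarrow> v \<in> smooth_closure \<Longrightarrow> (\<lambda>q. F (v q)) \<in> smooth_closure"
| inverse: "v \<in> smooth_closure \<Longrightarrow> (\<forall>q. v q \<noteq> 0) \<Longrightarrow> (\<lambda>q. inverse (v q)) \<in> smooth_closure"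

lemma smooth_closure_differentiable: "v \<in> smooth_closure \<Longrightarrow> v differentiable (at p)"
proof (induction v arbitrary: p rule: smooth_closure.induct)
  case (compose F v)
  then show ?case
    using smooth_fun_differentiable[OF compose(1)] differentiable_chain_at[of v p F]
    by (simp add: o_def)
qed (simp_all add: smooth_fun_differentiable bounded_linear_imp_differentiable
       differentiable_add differentiable_mult differentiable_inverse)

lemma smooth_closure_has_derivative:
  "v \<in> smooth_closure \<Longrightarrow> (v has_derivative frechet_derivative v (at q)) (at q)"
  using frechet_derivative_works smooth_closure_differentiable by blast

lemma smooth_closure_frechet_derivative:
  assumes "v \<in> smooth_closure"
  shows "(\<lambda>q. frechet_derivative v (at q) d) \<in> smooth_closure"
  using assms
proof (induction v rule: smooth_closure.induct)
  case (smooth v)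
  then show ?case
    by (simp add: smooth_fun_frechet_derivative smooth_closure.smooth)
next
  case (const c)
  have "frechet_derivative (\<lambda>q. c) (at q) d = 0" for q :: 'a
    by (rule frechet_derivative_eqI) simp
  then show ?case
    by (simp add: smooth_closure.const)
next
  case (linear l)
  have "frechet_derivative l (at q) d = l d" for q
    by (rule frechet_derivative_eqI) (rule bounded_linear.has_derivative[OF linear has_derivative_ident])
  then show ?case
    by (simp add: smooth_closure.const)
next
  case (add u v)
  have "frechet_derivative (\<lambda>q. u q + v q) (at q) d =
      frechet_derivative u (at q) d + frechet_derivative v (at q) d" for q
    by (rule frechet_derivative_eqI)
      (intro has_derivative_add smooth_closure_has_derivative add.hyps)
  then show ?case
    using smooth_closure.add[OF add.IH] by simp
next
  case (mult u v)
  have "frechet_derivative (\<lambda>q. u q * v q) (at q) d =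
      u q * frechet_derivative v (at q) d + frechet_derivative u (at q) d * v q" for q
    by (rule frechet_derivative_eqI)
      (intro has_derivative_mult smooth_closure_has_derivative mult.hyps)
  then show ?case
    using smooth_closure.add[OF smooth_closure.mult[OF mult.hyps(1) mult.IH(2)]
        smooth_closure.mult[OF mult.IH(1) mult.hyps(2)]]
    by simp
next
  case (compose F v)
  have "frechet_derivative (\<lambda>q. F (v q)) (at q) d = frechet_derivative v (at q) d * deriv F (v q)" for q
    by (rule frechet_derivative_eqI)
      (intro DERIV_compose_FDERIV smooth_fun_real_DERIV smooth_closure_has_derivative compose.hyps)
  then show ?case
    using smooth_closure.mult[OF compose.IH smooth_closure.compose[OF smooth_fun_deriv compose.hyps(2)]]
      compose.hyps(1) by simp
next
  case (inverse v)
  have "frechet_derivative (\<lambda>q. inverse (v q)) (at q) d =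
      (- 1) * ((inverse (v q) * frechet_derivative v (at q) d) * inverse (v q))" for q
    by (rule frechet_derivative_eqI, simp)
      (intro Deriv.has_derivative_inverse smooth_closure_has_derivative inverse.hyps(1)
        inverse.hyps(2)[rule_format])
  moreover have "(\<lambda>q. inverse (v q)) \<in> smooth_closure"
    using inverse.hyps by (rule smooth_closure.inverse)
  ultimately show ?case
    by (simp only:) (intro smooth_closure.mult smooth_closure.const inverse.IH)
qed

lemma smooth_closure_smooth: "v \<in> smooth_closure \<Longrightarrow> smooth_fun v"
  by (erule smooth_fun_coinduct[where S = "\<lambda>v. v \<in> smooth_closure"])
    (simp add: smooth_closure_differentiable smooth_closure_frechet_derivative)

lemma smooth_fun_const: "smooth_fun (\<lambda>q. c)"
  by (rule smooth_closure_smooth, rule smooth_closure.const)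

lemma smooth_fun_bounded_linear: "bounded_linear l \<Longrightarrow> smooth_fun l"
  by (rule smooth_closure_smooth, rule smooth_closure.linear)

lemma smooth_fun_add: "smooth_fun u \<Longrightarrow> smooth_fun v \<Longrightarrow> smooth_fun (\<lambda>q. u q + v q)"
  by (rule smooth_closure_smooth, rule smooth_closure.add; rule smooth_closure.smooth)

lemma smooth_fun_mult: "smooth_fun u \<Longrightarrow> smooth_fun v \<Longrightarrow> smooth_fun (\<lambda>q. u q * v q)"
  by (rule smooth_closure_smooth, rule smooth_closure.mult; rule smooth_closure.smooth)

lemma smooth_fun_uminus: "smooth_fun v \<Longrightarrow> smooth_fun (\<lambda>q. - v q)"
  using smooth_fun_mult[OF smooth_fun_const, of v "- 1"] by simp

lemma smooth_fun_diff: "smooth_fun u \<Longrightarrow> smooth_fun v \<Longrightarrow> smooth_fun (\<lambda>q. u q - v q)"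
  using smooth_fun_add[OF _ smooth_fun_uminus, of u v] by simp

lemma smooth_fun_compose:
  "smooth_fun (F :: real \<Rightarrow> real) \<Longrightarrow> smooth_fun v \<Longrightarrow> smooth_fun (\<lambda>q. F (v q))"
  by (rule smooth_closure_smooth, rule smooth_closure.compose, assumption, rule smooth_closure.smooth)

lemma smooth_fun_inverse:
  "smooth_fun v \<Longrightarrow> (\<forall>q. v q \<noteq> 0) \<Longrightarrow> smooth_fun (\<lambda>q. inverse (v q))"
  by (rule smooth_closure_smooth, rule smooth_closure.inverse[OF smooth_closure.smooth])

lemma smooth_fun_divide:
  "smooth_fun u \<Longrightarrow> smooth_fun v \<Longrightarrow> (\<forall>q. v q \<noteq> 0) \<Longrightarrow> smooth_fun (\<lambda>q. u q / v q)"
  using smooth_fun_mult[OF _ smooth_fun_inverse, of u v] by (simp add: divide_inverse)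

lemma smooth_fun_intro:
  assumes "\<And>q. (v has_derivative (\<lambda>d. v' d q)) (at q)" and "\<And>d. smooth_fun (v' d)"
  shows "smooth_fun v"
proof -
  have "(\<lambda>q. frechet_derivative v (at q) d) = v' d" for d
    using assms(1) frechet_derivative_eqI by blast
  then show ?thesis
    unfolding smooth_fun_iff[of v] using assms differentiableI by metis
qed

lemma smooth_fun_real_intro:
  fixes F F' :: "real \<Rightarrow> real"
  assumes "\<And>x. (F has_real_derivative F' x) (at x)" and "smooth_fun F'"
  shows "smooth_fun F"
proof (rule smooth_fun_intro)
  show "(F has_derivative (\<lambda>d. F' q * d)) (at q)" for q
    using assms(1)[of q] by (simp add: has_field_derivative_def)
  show "smooth_fun (\<lambda>q. F' q * d)" for d
    by (intro smooth_fun_mult smooth_fun_const assms(2))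
qed

lemma smooth_fun_exp: "smooth_fun (\<lambda>x::real. exp x)"
proof (rule smooth_fun_coinduct[where S = "\<lambda>v. \<exists>c. v = (\<lambda>x::real. c * exp x)"])
  fix v :: "real \<Rightarrow> real"
  assume "\<exists>c. v = (\<lambda>x. c * exp x)"
  then obtain c where v: "v = (\<lambda>x. c * exp x)" ..
  have "(v has_derivative (\<lambda>d. d * c * exp q)) (at q)" for q
    unfolding v by (auto intro!: derivative_eq_intros)
  then have "v differentiable (at q)" and "frechet_derivative v (at q) d = d * c * exp q" for q d
    by (auto intro: differentiableI frechet_derivative_eqI)
  then show "(\<forall>p. v differentiable (at p)) \<and>
      (\<forall>d. \<exists>c. (\<lambda>q. frechet_derivative v (at q) d) = (\<lambda>x. c * exp x))"
    by auto
qed (rule exI[of _ 1], simp)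

lemma smooth_fun_compose_bounded_linear:
  assumes "smooth_fun \<Phi>" and L: "bounded_linear L"
  shows "smooth_fun (\<lambda>q. \<Phi> (L q))"
proof (rule smooth_fun_coinduct[where S = "\<lambda>v. \<exists>\<Phi>. smooth_fun \<Phi> \<and> v = (\<lambda>q. \<Phi> (L q))"])
  fix v
  assume "\<exists>\<Phi>. smooth_fun \<Phi> \<and> v = (\<lambda>q. \<Phi> (L q))"
  then obtain \<Phi> where \<Phi>: "smooth_fun \<Phi>" and v: "v = (\<lambda>q. \<Phi> (L q))" by blast
  have v': "(v has_derivative (\<lambda>d. frechet_derivative \<Phi> (at (L q)) (L d))) (at q)" for q
    unfolding v using diff_chain_at[OF bounded_linear.has_derivative[OF L has_derivative_ident]
        frechet_derivative_works[THEN iffD1, OF smooth_fun_differentiable[OF \<Phi>]]]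
    by (simp add: o_def)
  show "(\<forall>p. v differentiable (at p)) \<and>
      (\<forall>d. \<exists>\<Phi>. smooth_fun \<Phi> \<and> (\<lambda>q. frechet_derivative v (at q) d) = (\<lambda>q. \<Phi> (L q)))"
  proof (intro conjI allI)
    show "v differentiable (at p)" for p
      using v' by (rule differentiableI)
    show "\<exists>\<Psi>. smooth_fun \<Psi> \<and> (\<lambda>q. frechet_derivative v (at q) d) = (\<lambda>q. \<Psi> (L q))" for d
      using smooth_fun_frechet_derivative[OF \<Phi>] frechet_derivative_eqI[OF v']
      by (intro exI[of _ "\<lambda>p. frechet_derivative \<Phi> (at p) (L d)"]) simp
  qed
qed (use assms in blast)

lemma smooth_fun_separated:
  fixes \<psi> :: "real \<times> real \<Rightarrow> real" and E :: "real \<Rightarrow> real"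
  assumes s\<psi>: "smooth_fun \<psi>" and sE: "smooth_fun E"
  shows "smooth_fun (\<lambda>(t, x, w). \<psi> (t, x) * E w)"
proof -
  have "bounded_linear (\<lambda>q::real \<times> real \<times> real. (fst q, fst (snd q)))"
    by (intro bounded_linear_Pair bounded_linear_fst bounded_linear_fst_comp bounded_linear_snd)
  then have "smooth_fun (\<lambda>q::real \<times> real \<times> real. \<psi> (fst q, fst (snd q)))"
    by (rule smooth_fun_compose_bounded_linear[OF s\<psi>])
  moreover have "smooth_fun (\<lambda>q::real \<times> real \<times> real. E (snd (snd q)))"
    by (rule smooth_fun_compose[OF sE smooth_fun_bounded_linear])
      (intro bounded_linear_snd_comp bounded_linear_snd)
  ultimately show ?thesis
    unfolding split_def by (rule smooth_fun_mult)
qed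

lemma DERIV_compose_path:
  fixes v :: "'a::real_normed_vector \<Rightarrow> real"
  assumes "v differentiable (at (c s))" and "(c has_vector_derivative c') (at s)"
  shows "((\<lambda>r. v (c r)) has_real_derivative frechet_derivative v (at (c s)) c') (at s)"
proof -
  let ?D = "frechet_derivative v (at (c s))"
  have v: "(v has_derivative ?D) (at (c s))"
    using assms(1) frechet_derivative_works by blast
  have "(\<lambda>h. ?D (h *\<^sub>R c')) = (\<lambda>h. ?D c' * h)"
    using linear_scale[OF has_derivative_linear[OF v]] by (simp add: mult.commute)
  then have "((\<lambda>r. v (c r)) has_derivative (\<lambda>h. ?D c' * h)) (at s)"
    using has_derivative_compose[OF assms(2)[unfolded has_vector_derivative_def] v] by simp
  then show ?thesis
    unfolding has_field_derivative_def .
qed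

lemma pd_eq_frechet_derivative:
  fixes v :: "real \<times> real \<Rightarrow> real"
  assumes "v differentiable (at q)"
  shows "pd True v q = frechet_derivative v (at q) (1, 0)"
    and "pd False v q = frechet_derivative v (at q) (0, 1)"
proof -
  obtain t x where q: "q = (t, x)"
    by fastforce
  have "((\<lambda>r. (r, x)) has_vector_derivative (1, 0)) (at t)"
    and "((\<lambda>r. (t, r)) has_vector_derivative (0, 1)) (at x)"
    by (auto intro!: derivative_eq_intros)
  then have "((\<lambda>r. v (r, x)) has_real_derivative frechet_derivative v (at q) (1, 0)) (at t)"
    and "((\<lambda>r. v (t, r)) has_real_derivative frechet_derivative v (at q) (0, 1)) (at x)"
    using DERIV_compose_path[of v "\<lambda>r. (r, x)" t] DERIV_compose_path[of v "\<lambda>r. (t, r)" x] assms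
    unfolding q by simp_all
  then show "pd True v q = frechet_derivative v (at q) (1, 0)"
    and "pd False v q = frechet_derivative v (at q) (0, 1)"
    unfolding q by (simp_all add: pd_def DERIV_imp_deriv)
qed

lemma frechet_derivative_pair:
  fixes v :: "real \<times> real \<Rightarrow> real"
  assumes "v differentiable (at q)"
  shows "frechet_derivative v (at q) (a, b) = a * pd True v q + b * pd False v q"
proof -
  have lin: "linear (frechet_derivative v (at q))"
    using assms frechet_derivative_works has_derivative_linear by blast
  have "(a, b) = a *\<^sub>R (1, 0) + b *\<^sub>R (0::real, 1::real)"
    by simp
  then show ?thesis
    unfolding pd_eq_frechet_derivative[OF assms] by (simp only: linear_add[OF lin] linear_scale[OF lin]) simp
qed

lemma DERIV_compose_pair:
  fixes v :: "real \<times> real \<Rightarrow> real"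
  assumes "v differentiable (at (T s, X s))"
    and "(T has_real_derivative T') (at s)" and "(X has_real_derivative X') (at s)"
  shows "((\<lambda>s. v (T s, X s)) has_real_derivative
      T' * pd True v (T s, X s) + X' * pd False v (T s, X s)) (at s)"
proof -
  have "((\<lambda>s. (T s, X s)) has_vector_derivative (T', X')) (at s)"
    using assms(2,3)
    by (intro has_vector_derivative_Pair) (simp_all add: has_real_derivative_iff_has_vector_derivative)
  then show ?thesis
    using DERIV_compose_path[of v "\<lambda>s. (T s, X s)" s "(T', X')"] assms(1) frechet_derivative_pair[OF assms(1)]
    by simp
qed

lemma DERIV_pd:
  fixes v :: "real \<times> real \<Rightarrow> real"
  assumes "smooth_fun v"
  shows "((\<lambda>r. v (r, x)) has_real_derivative pd True v (t, x)) (at t)"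
    and "((\<lambda>r. v (t, r)) has_real_derivative pd False v (t, x)) (at x)"
  using DERIV_compose_pair[where T = "\<lambda>r. r" and X = "\<lambda>r. x" and s = t,
      OF smooth_fun_differentiable[OF assms] DERIV_ident DERIV_const]
    DERIV_compose_pair[where T = "\<lambda>r. t" and X = "\<lambda>r. r" and s = x,
      OF smooth_fun_differentiable[OF assms] DERIV_const DERIV_ident]
  by simp_all

lemma DERIV_compose_x_line:
  fixes u :: "real \<times> real \<Rightarrow> real" and F :: "real \<Rightarrow> real"
  assumes "smooth_fun u" and "smooth_fun F"
  shows "((\<lambda>s. F (u (t, s))) has_real_derivative deriv F (u (t, x)) * pd False u (t, x)) (at x)"
  using DERIV_chain2[OF smooth_fun_real_DERIV[OF assms(2)] DERIV_pd(2)[OF assms(1)]] .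

lemma pd_eqI:
  shows "((\<lambda>s. v (s, x)) has_real_derivative D) (at t) \<Longrightarrow> pd True v (t, x) = D"
    and "((\<lambda>s. v (t, s)) has_real_derivative D) (at x) \<Longrightarrow> pd False v (t, x) = D"
  by (simp_all add: pd_def DERIV_imp_deriv)

lemma smooth_fun_pd:
  assumes "smooth_fun v"
  shows "smooth_fun (pd b v)"
proof -
  have "pd b v = (\<lambda>q. frechet_derivative v (at q) (if b then (1, 0) else (0, 1)))"
    using pd_eq_frechet_derivative[OF smooth_fun_differentiable[OF assms]] by (cases b) auto
  then show ?thesis
    using smooth_fun_frechet_derivative[OF assms] by simp
qed

lemma pd_const: "pd b (\<lambda>q. c) = (\<lambda>q. 0)"
  by (auto simp: pd_def fun_eq_iff)

lemma DERIV_compose_triple: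
  fixes \<Phi> :: "real \<times> real \<times> real \<Rightarrow> real"
  assumes "\<Phi> differentiable (at (T s, X s, W s))"
    and "(T has_real_derivative T') (at s)" and "(X has_real_derivative X') (at s)"
    and "(W has_real_derivative W') (at s)"
  shows "((\<lambda>s. \<Phi> (T s, X s, W s)) has_real_derivative
     T' * frechet_derivative \<Phi> (at (T s, X s, W s)) (1, 0, 0)
     + X' * frechet_derivative \<Phi> (at (T s, X s, W s)) (0, 1, 0)
     + W' * frechet_derivative \<Phi> (at (T s, X s, W s)) (0, 0, 1)) (at s)"
proof -
  have c: "((\<lambda>s. (T s, X s, W s)) has_vector_derivative (T', X', W')) (at s)"
    using assms(2-4)
    by (intro has_vector_derivative_Pair) (simp_all add: has_real_derivative_iff_has_vector_derivative)
  have lin: "linear (frechet_derivative \<Phi> (at (T s, X s, W s)))"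
    using assms(1) frechet_derivative_works has_derivative_linear by blast
  have "(T', X', W') = T' *\<^sub>R (1, 0, 0) + X' *\<^sub>R (0, 1, 0) + W' *\<^sub>R (0::real, 0::real, 1::real)"
    by simp
  then have "frechet_derivative \<Phi> (at (T s, X s, W s)) (T', X', W') =
     T' * frechet_derivative \<Phi> (at (T s, X s, W s)) (1, 0, 0)
     + X' * frechet_derivative \<Phi> (at (T s, X s, W s)) (0, 1, 0)
     + W' * frechet_derivative \<Phi> (at (T s, X s, W s)) (0, 0, 1)"
    by (simp only: linear_add[OF lin] linear_scale[OF lin]) simp
  then show ?thesis
    using DERIV_compose_path[OF assms(1) c] by simp
qed

lemma DERIV_triple_axes:
  fixes \<Phi> :: "real \<times> real \<times> real \<Rightarrow> real"
  assumes "smooth_fun \<Phi>"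
  shows "((\<lambda>s. \<Phi> (s, x, w)) has_real_derivative frechet_derivative \<Phi> (at (t, x, w)) (1, 0, 0)) (at t)"
    and "((\<lambda>s. \<Phi> (t, s, w)) has_real_derivative frechet_derivative \<Phi> (at (t, x, w)) (0, 1, 0)) (at x)"
    and "((\<lambda>s. \<Phi> (t, x, s)) has_real_derivative frechet_derivative \<Phi> (at (t, x, w)) (0, 0, 1)) (at w)"
  using DERIV_compose_triple[OF smooth_fun_differentiable[OF assms],
      where T = "\<lambda>s. s" and X = "\<lambda>s. x" and W = "\<lambda>s. w" and s = t and T' = 1 and X' = 0 and W' = 0]
    DERIV_compose_triple[OF smooth_fun_differentiable[OF assms],
      where T = "\<lambda>s. t" and X = "\<lambda>s. s" and W = "\<lambda>s. w" and s = x and T' = 0 and X' = 1 and W' = 0]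
    DERIV_compose_triple[OF smooth_fun_differentiable[OF assms],
      where T = "\<lambda>s. t" and X = "\<lambda>s. x" and W = "\<lambda>s. s" and s = w and T' = 0 and X' = 0 and W' = 1]
  by simp_all

lemma linear_ode_solution:
  fixes y a A :: "real \<Rightarrow> real"
  assumes dy: "\<And>s. (y has_real_derivative a s * y s) (at s)"
    and dA: "\<And>s. (A has_real_derivative a s) (at s)"
  shows "y s = y 0 * exp (A s - A 0)"
proof -
  have "((\<lambda>s. y s * exp (- A s)) has_real_derivative 0) (at s)" for s
    by (rule DERIV_cong, (rule DERIV_mult dy DERIV_chain2[OF DERIV_exp] DERIV_minus dA)+) simp
  then have "y s * exp (- A s) = y 0 * exp (- A 0)"
    using DERIV_isconst_all by blast
  then have "y s * exp (- A s) * exp (A s) = y 0 * exp (- A 0) * exp (A s)"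
    by simp
  then show ?thesis
    by (simp add: exp_minus exp_diff field_simps)
qed

lemma second_order_ode_exp_solution:
  fixes y y' :: "real \<Rightarrow> real"
  assumes dy: "\<And>x. (y has_real_derivative y' x) (at x)"
    and dy': "\<And>x. (y' has_real_derivative a * y' x) (at x)" and "a \<noteq> 0"
  shows "y x = y' 0 / a * exp (a * x) + (y 0 - y' 0 / a)"
proof -
  have y': "y' s = y' 0 * exp (a * s)" for s
  proof -
    have "y' s = y' 0 * exp (a * s - a * 0)"
      using dy' by (rule linear_ode_solution) (auto intro!: derivative_eq_intros)
    then show ?thesis
      by simp
  qed
  have "((\<lambda>s. y s - y' 0 / a * exp (a * s)) has_real_derivative 0) (at s)" for s
  proof -
    have "((\<lambda>s. y s - y' 0 / a * exp (a * s)) has_real_derivative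
        y' s - y' 0 / a * (exp (a * s) * a)) (at s)"
      by (intro DERIV_diff DERIV_cmult dy DERIV_chain2[OF DERIV_exp]) (auto intro!: derivative_eq_intros)
    then show ?thesis
      using \<open>a \<noteq> 0\<close> y'[of s] by simp
  qed
  then have "y x - y' 0 / a * exp (a * x) = y 0 - y' 0 / a * exp (a * 0)"
    using DERIV_isconst_all by blast
  then show ?thesis
    by simp
qed

lemma second_order_ode_linear_solution:
  fixes y y' :: "real \<Rightarrow> real"
  assumes dy: "\<And>x. (y has_real_derivative y' x) (at x)"
    and dy': "\<And>x. (y' has_real_derivative 0) (at x)"
  shows "y x = y' 0 * x + y 0"
proof -
  have y': "y' s = y' 0" for s
    using DERIV_isconst_all dy' by blast
  have "((\<lambda>s. y s - y' 0 * s) has_real_derivative 0) (at s)" for s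
  proof -
    have "((\<lambda>s. y s - y' 0 * s) has_real_derivative y' s - y' 0) (at s)"
      by (auto intro!: derivative_eq_intros dy)
    then show ?thesis
      using y'[of s] by simp
  qed
  then have "y x - y' 0 * x = y 0 - y' 0 * 0"
    using DERIV_isconst_all by blast
  then show ?thesis
    by simp
qed

lemma transport_solution:
  fixes \<psi> :: "real \<times> real \<Rightarrow> real"
  assumes s\<psi>: "smooth_fun \<psi>" and \<psi>_eq: "\<And>q. pd True \<psi> q = b * pd False \<psi> q"
  shows "\<psi> (t, x) = \<psi> (0, x + b * t)"
proof -
  have "((\<lambda>s. \<psi> (s, x + b * t - b * s)) has_real_derivative 0) (at s)" for s
  proof -
    have "((\<lambda>s. x + b * t - b * s) has_real_derivative - b) (at s)"
      by (auto intro!: derivative_eq_intros)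
    from DERIV_compose_pair[OF smooth_fun_differentiable[OF s\<psi>] DERIV_ident this] show ?thesis
      by (simp add: \<psi>_eq)
  qed
  then have "\<psi> (t, x + b * t - b * t) = \<psi> (0, x + b * t - b * 0)"
    using DERIV_isconst_all[of "\<lambda>s. \<psi> (s, x + b * t - b * s)"] by blast
  then show ?thesis
    by simp
qed

lemma antiderivative_exists:
  fixes k :: "real \<Rightarrow> real"
  assumes "\<And>w. isCont k w"
  obtains P where "\<And>w. (P has_real_derivative k w) (at w)"
proof -
  have "((\<lambda>u. LBINT y=ereal 0..u. k y) has_real_derivative k w) (at w)" for w
  proof -
    define a where "a = min 0 w - 1"
    define b where "b = max 0 w + 1"
    have "a < w" "w < b" "a \<le> 0" "0 \<le> b"
      unfolding a_def b_def by linarith+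
    then have "((\<lambda>u. LBINT y=ereal 0..u. k y) has_vector_derivative k w) (at w within {a..b})"
      using assms by (intro interval_integral_FTC2 continuous_at_imp_continuous_on) auto
    moreover have "at w within {a..b} = at w"
      using \<open>a < w\<close> \<open>w < b\<close> by (intro at_within_interior) auto
    ultimately show ?thesis
      by (simp add: has_real_derivative_iff_has_vector_derivative)
  qed
  then show thesis
    by (rule that)
qed

lemma nonconstant_if_deriv_nonzero:
  fixes g :: "real \<Rightarrow> real"
  assumes "deriv g \<noteq> (\<lambda>w. 0)"
  obtains w1 w2 where "g w1 \<noteq> g w2"
proof -
  have "\<exists>w1 w2. g w1 \<noteq> g w2"
  proof (rule ccontr)
    assume "\<not> (\<exists>w1 w2. g w1 \<noteq> g w2)"
    then have "g = (\<lambda>w. g 0)"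
      by auto
    then have "deriv g = (\<lambda>w. 0)"
      by (metis DERIV_const DERIV_imp_deriv)
    then show False
      using assms by blast
  qed
  then show thesis
    using that by blast
qed

lemma pdj_eqI: "((\<lambda>s. L (z(k := s))) has_real_derivative D) (at (z k)) \<Longrightarrow> pdj k L z = D"
  by (simp add: pdj_def DERIV_imp_deriv)

lemma KS_jet2:
  "KS f g h (jet2 u \<nu> p) =
     pd True u p - f (u p) * pd False u p - g (u p) * pd False (pd False u) p + h (u p) * (pd False u p)\<^sup>2"
  by (simp add: KS_def jet2_def)

context
  fixes f g h :: "real \<Rightarrow> real"
  assumes sf: "smooth_fun f" and sg: "smooth_fun g" and sh: "smooth_fun h"
begin

lemma pdj_KS_lag:
  shows "pdj 2 (KS_lag f g h) z =
      z 8 * (- deriv f (z 2) * z 4 - deriv g (z 2) * z 7 + deriv h (z 2) * (z 4)\<^sup>2)"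
    and "pdj 3 (KS_lag f g h) z = z 8"
    and "pdj 4 (KS_lag f g h) z = z 8 * (2 * h (z 2) * z 4 - f (z 2))"
    and "pdj 5 (KS_lag f g h) z = 0"
    and "pdj 6 (KS_lag f g h) z = 0"
    and "pdj 7 (KS_lag f g h) z = - z 8 * g (z 2)"
  unfolding KS_lag_def KS_def
  by (rule pdj_eqI; auto intro!: derivative_eq_intros smooth_fun_real_DERIV sf sg sh simp: algebra_simps)+

lemma euler_u_KS_lag:
  shows "euler_u (KS_lag f g h) u \<nu> p =
     \<nu> p * (- deriv f (u p) * pd False u p - deriv g (u p) * pd False (pd False u) p
       + deriv h (u p) * (pd False u p)\<^sup>2)
     - pd True \<nu> p
     - pd False (\<lambda>q. \<nu> q * (2 * h (u q) * pd False u q - f (u q))) p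
     + pd False (pd False (\<lambda>q. - \<nu> q * g (u q))) p"
  unfolding euler_u_def by (simp add: pdj_KS_lag jet2_def pd_const)

lemma pd_x_KS_lag_flux:
  fixes x :: real
  assumes su: "smooth_fun u" and nu_x: "\<And>s. ((\<lambda>r. \<nu> (t, r)) has_real_derivative \<nu>x s) (at s)"
  defines "w \<equiv> u (t, x)" and "ux \<equiv> pd False u (t, x)" and "uxx \<equiv> pd False (pd False u) (t, x)"
  shows "pd False (\<lambda>q. \<nu> q * (2 * h (u q) * pd False u q - f (u q))) (t, x) =
    \<nu>x x * (2 * h w * ux - f w) + \<nu> (t, x) * (2 * deriv h w * ux\<^sup>2 + 2 * h w * uxx - deriv f w * ux)"
proof (rule pd_eqI(2))
  show "((\<lambda>s. \<nu> (t, s) * (2 * h (u (t, s)) * pd False u (t, s) - f (u (t, s)))) has_real_derivative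
      \<nu>x x * (2 * h w * ux - f w) + \<nu> (t, x) * (2 * deriv h w * ux\<^sup>2 + 2 * h w * uxx - deriv f w * ux))
      (at x)"
    unfolding w_def ux_def uxx_def
    by (rule DERIV_cong, (rule DERIV_diff DERIV_mult DERIV_const nu_x DERIV_compose_x_line su sf sh
          DERIV_pd(2) smooth_fun_pd)+) (simp add: power2_eq_square algebra_simps)
qed

lemma pd_xx_KS_lag_diffusion:
  assumes su: "smooth_fun u" and nu_x: "\<And>s. ((\<lambda>r. \<nu> (t, r)) has_real_derivative \<nu>x s) (at s)"
    and nu_xx: "(\<nu>x has_real_derivative \<nu>xx) (at x)"
  defines "w \<equiv> u (t, x)" and "ux \<equiv> pd False u (t, x)" and "uxx \<equiv> pd False (pd False u) (t, x)"
  shows "pd False (pd False (\<lambda>q. - \<nu> q * g (u q))) (t, x) =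
    - (g w * \<nu>xx + 2 * deriv g w * ux * \<nu>x x + (deriv (deriv g) w * ux\<^sup>2 + deriv g w * uxx) * \<nu> (t, x))"
proof -
  define V where "V s = - (\<nu>x s * g (u (t, s)) + \<nu> (t, s) * (deriv g (u (t, s)) * pd False u (t, s)))" for s
  have "((\<lambda>r. - \<nu> (t, r) * g (u (t, r))) has_real_derivative V s) (at s)" for s
    unfolding V_def
    by (rule DERIV_cong, (rule DERIV_mult DERIV_minus nu_x DERIV_compose_x_line su sg)+)
      (simp add: algebra_simps)
  then have "pd False (\<lambda>q. - \<nu> q * g (u q)) (t, s) = V s" for s
    by (rule pd_eqI(2))
  then have "pd False (pd False (\<lambda>q. - \<nu> q * g (u q))) (t, x) = deriv V x"
    by (simp add: pd_def[of False "pd False _"])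
  also have "\<dots> = - (g w * \<nu>xx + 2 * deriv g w * ux * \<nu>x x
      + (deriv (deriv g) w * ux\<^sup>2 + deriv g w * uxx) * \<nu> (t, x))"
    unfolding V_def[abs_def] w_def ux_def uxx_def
    by (rule DERIV_imp_deriv, rule DERIV_cong, (rule DERIV_add DERIV_mult DERIV_minus nu_x nu_xx
          DERIV_compose_x_line su sg smooth_fun_deriv DERIV_pd(2) smooth_fun_pd)+)
      (simp add: power2_eq_square algebra_simps)
  finally show ?thesis .
qed

lemma euler_u_KS_lag_line:
  assumes su: "smooth_fun u"
    and nu_t: "((\<lambda>s. \<nu> (s, x)) has_real_derivative \<nu>t) (at t)"
    and nu_x: "\<And>s. ((\<lambda>r. \<nu> (t, r)) has_real_derivative \<nu>x s) (at s)"
    and nu_xx: "(\<nu>x has_real_derivative \<nu>xx) (at x)"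
  defines "w \<equiv> u (t, x)" and "ux \<equiv> pd False u (t, x)" and "uxx \<equiv> pd False (pd False u) (t, x)"
  shows "euler_u (KS_lag f g h) u \<nu> (t, x) =
     - \<nu>t + (f w - 2 * (h w + deriv g w) * ux) * \<nu>x x - g w * \<nu>xx
     - ((deriv h w + deriv (deriv g) w) * ux\<^sup>2 + 2 * (h w + deriv g w) * uxx) * \<nu> (t, x)"
  unfolding euler_u_KS_lag pd_eqI(1)[OF nu_t] pd_x_KS_lag_flux[OF su nu_x]
    pd_xx_KS_lag_diffusion[OF su nu_x nu_xx] w_def ux_def uxx_def
  by (simp add: algebra_simps)

lemma KS_weight_eq_deriv:
  assumes sE: "smooth_fun E" and E_eq: "\<And>w. g w * deriv E w = - (deriv g w + h w) * E w"
  shows "deriv g w * deriv E w + g w * deriv (deriv E) w =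
    - (deriv (deriv g) w + deriv h w) * E w - (deriv g w + h w) * deriv E w"
proof -
  have "((\<lambda>w. g w * deriv E w) has_real_derivative deriv g w * deriv E w + g w * deriv (deriv E) w) (at w)"
    and "((\<lambda>w. - (deriv g w + h w) * E w) has_real_derivative
      - (deriv (deriv g) w + deriv h w) * E w - (deriv g w + h w) * deriv E w) (at w)"
    by (auto intro!: derivative_eq_intros smooth_fun_real_DERIV smooth_fun_deriv sE sg sh
        simp: algebra_simps)
  moreover have "(\<lambda>w. g w * deriv E w) = (\<lambda>w. - (deriv g w + h w) * E w)"
    using E_eq by simp
  ultimately show ?thesis
    using DERIV_unique by metis
qed

lemma euler_u_KS_lag_factor:
  assumes sE: "smooth_fun E" and E_eq: "\<And>w. g w * deriv E w = - (deriv g w + h w) * E w"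
    and s\<psi>: "smooth_fun \<psi>"
    and \<psi>_eq: "\<And>w q. pd True \<psi> q = f w * pd False \<psi> q - g w * pd False (pd False \<psi>) q"
    and su: "smooth_fun u"
  shows "euler_u (KS_lag f g h) u (\<lambda>q. \<psi> q * E (u q)) p =
    - \<psi> p * deriv E (u p) * KS f g h (jet2 u (\<lambda>q. \<psi> q * E (u q)) p)"
proof -
  obtain t x where p: "p = (t, x)"
    by fastforce
  define w where "w = u (t, x)"
  have nu_t: "((\<lambda>s. \<psi> (s, x) * E (u (s, x))) has_real_derivative
      pd True \<psi> (t, x) * E w + \<psi> (t, x) * (deriv E w * pd True u (t, x))) (at t)"
    unfolding w_def
    by (rule DERIV_cong, (rule DERIV_mult DERIV_chain2[OF smooth_fun_real_DERIV[OF sE]] DERIV_pd(1) s\<psi> su)+)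
      simp
  have nu_x: "((\<lambda>r. \<psi> (t, r) * E (u (t, r))) has_real_derivative
      pd False \<psi> (t, s) * E (u (t, s)) + \<psi> (t, s) * (deriv E (u (t, s)) * pd False u (t, s))) (at s)" for s
    by (rule DERIV_cong, (rule DERIV_mult DERIV_compose_x_line su sE DERIV_pd(2) s\<psi>)+) simp
  have nu_xx: "((\<lambda>s. pd False \<psi> (t, s) * E (u (t, s)) + \<psi> (t, s) * (deriv E (u (t, s)) * pd False u (t, s)))
      has_real_derivative pd False (pd False \<psi>) (t, x) * E w
        + 2 * pd False \<psi> (t, x) * deriv E w * pd False u (t, x)
      + \<psi> (t, x) * (deriv (deriv E) w * (pd False u (t, x))\<^sup>2 + deriv E w * pd False (pd False u) (t, x))) (at x)"
    unfolding w_def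
    by (rule DERIV_cong, (rule DERIV_add DERIV_mult DERIV_compose_x_line su sE smooth_fun_deriv
          DERIV_pd(2) smooth_fun_pd s\<psi>)+) (simp add: power2_eq_square algebra_simps)
  \<comment> \<open>\<open>E_eq\<close> and its derivative cancel every term that is not a multiple of the KS expression\<close>
  show ?thesis
    unfolding p euler_u_KS_lag_line[OF su nu_t nu_x nu_xx] KS_jet2
    using E_eq[of w] KS_weight_eq_deriv[OF sE E_eq, of w] \<psi>_eq[of "(t, x)" w]
    unfolding w_def by algebra
qed

lemma euler_u_KS_lag_compose:
  fixes \<Phi> :: "real \<times> real \<times> real \<Rightarrow> real"
  assumes s\<Phi>: "smooth_fun \<Phi>" and su: "smooth_fun u" and ux: "pd False u (t, x) = 0"
  defines "w \<equiv> u (t, x)"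
    and "\<Phi>t \<equiv> frechet_derivative \<Phi> (at (t, x, u (t, x))) (1, 0, 0)"
    and "\<Phi>x \<equiv> frechet_derivative \<Phi> (at (t, x, u (t, x))) (0, 1, 0)"
    and "\<Phi>w \<equiv> frechet_derivative \<Phi> (at (t, x, u (t, x))) (0, 0, 1)"
    and "\<Phi>xx \<equiv>
      frechet_derivative (\<lambda>q. frechet_derivative \<Phi> (at q) (0, 1, 0)) (at (t, x, u (t, x))) (0, 1, 0)"
  shows "euler_u (KS_lag f g h) u (\<lambda>q. \<Phi> (fst q, snd q, u q)) (t, x) =
     - \<Phi>t + f w * \<Phi>x - g w * \<Phi>xx - pd True u (t, x) * \<Phi>w
     - pd False (pd False u) (t, x) * (g w * \<Phi>w + 2 * (h w + deriv g w) * \<Phi> (t, x, w))"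
proof -
  define Dx where "Dx q = frechet_derivative \<Phi> (at q) (0, 1, 0)" for q
  define Dw where "Dw q = frechet_derivative \<Phi> (at q) (0, 0, 1)" for q
  have d\<Phi>: "\<Phi> differentiable (at q)" and dDx: "Dx differentiable (at q)" and dDw: "Dw differentiable (at q)"
    for q
    unfolding Dx_def[abs_def] Dw_def[abs_def]
    using smooth_fun_differentiable smooth_fun_frechet_derivative s\<Phi> by blast+
  have nu_t: "((\<lambda>s. \<Phi> (fst (s, x), snd (s, x), u (s, x))) has_real_derivative
      \<Phi>t + pd True u (t, x) * \<Phi>w) (at t)"
    using DERIV_compose_triple[where T = "\<lambda>s. s" and X = "\<lambda>s. x" and W = "\<lambda>s. u (s, x)",
        OF d\<Phi> DERIV_ident DERIV_const DERIV_pd(1)[OF su]]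
    by (simp add: \<Phi>t_def \<Phi>w_def w_def)
  have nu_x: "((\<lambda>r. \<Phi> (fst (t, r), snd (t, r), u (t, r))) has_real_derivative
      Dx (t, s, u (t, s)) + pd False u (t, s) * Dw (t, s, u (t, s))) (at s)" for s
    using DERIV_compose_triple[where T = "\<lambda>s. t" and X = "\<lambda>s. s" and W = "\<lambda>s. u (t, s)",
        OF d\<Phi> DERIV_const DERIV_ident DERIV_pd(2)[OF su]]
    by (simp add: Dx_def Dw_def)
  have nu_xx: "((\<lambda>s. Dx (t, s, u (t, s)) + pd False u (t, s) * Dw (t, s, u (t, s))) has_real_derivative
      \<Phi>xx + pd False (pd False u) (t, x) * \<Phi>w) (at x)"
    by (rule DERIV_cong, (rule DERIV_add DERIV_mult DERIV_compose_triple[OF dDx]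
          DERIV_compose_triple[OF dDw] DERIV_const DERIV_ident DERIV_pd(2) smooth_fun_pd su)+)
      (simp add: ux \<Phi>xx_def \<Phi>w_def Dx_def[abs_def] Dw_def w_def)
  show ?thesis
    using euler_u_KS_lag_line[OF su nu_t nu_x nu_xx] ux
    by (simp add: \<Phi>x_def Dx_def w_def algebra_simps)
qed

lemma KS_subst_test_identity:
  assumes sub: "KS_subst f g h \<phi>"
  defines "\<Phi> \<equiv> \<lambda>(t, x, w). \<phi> t x w"
  shows "- frechet_derivative \<Phi> (at (t, x, w)) (1, 0, 0)
     + f w * frechet_derivative \<Phi> (at (t, x, w)) (0, 1, 0)
     - g w * frechet_derivative (\<lambda>q. frechet_derivative \<Phi> (at q) (0, 1, 0)) (at (t, x, w)) (0, 1, 0)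
     - 4 * c * ((deriv g w + h w) * \<phi> t x w + g w * frechet_derivative \<Phi> (at (t, x, w)) (0, 0, 1)) = 0"
proof -
  have s\<Phi>: "smooth_fun \<Phi>"
    using sub unfolding KS_subst_def \<Phi>_def by blast
  obtain \<Lambda> where \<Lambda>: "\<And>u p. smooth_fun u \<Longrightarrow> euler_u (KS_lag f g h) u (\<lambda>q. \<phi> (fst q) (snd q) (u q)) p
      = \<Lambda> (fst p) (snd p) (jet u p) * KS f g h (jet2 u (\<lambda>q. \<phi> (fst q) (snd q) (u q)) p)"
    using sub unfolding KS_subst_def by blast
  define u where "u q = w + c * (snd q - x)\<^sup>2 + 2 * c * g w * (fst q - t)" for q
  have su: "smooth_fun u"
    unfolding u_def power2_eq_square
    by (intro smooth_fun_add smooth_fun_mult smooth_fun_diff smooth_fun_const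
        smooth_fun_bounded_linear[OF bounded_linear_fst] smooth_fun_bounded_linear[OF bounded_linear_snd])
  have u_t: "pd True u q = 2 * c * g w" and u_x: "pd False u q = 2 * c * (snd q - x)" for q
    unfolding pd_def u_def by (auto intro!: DERIV_imp_deriv derivative_eq_intros)
  then have u_xx: "pd False (pd False u) q = 2 * c" for q
    unfolding pd_def by (auto intro!: DERIV_imp_deriv derivative_eq_intros)
  have "u (t, x) = w"
    by (simp add: u_def)
  moreover have "KS f g h (jet2 u (\<lambda>q. \<phi> (fst q) (snd q) (u q)) (t, x)) = 0"
    unfolding KS_jet2 u_t u_x u_xx by (simp add: u_def)
  ultimately have "euler_u (KS_lag f g h) u (\<lambda>q. \<Phi> (fst q, snd q, u q)) (t, x) = 0"
    using \<Lambda>[OF su, of "(t, x)"] by (simp add: \<Phi>_def)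
  then show ?thesis
    using \<open>u (t, x) = w\<close> unfolding euler_u_KS_lag_compose[OF s\<Phi> su u_x[of "(t, x)", simplified]] u_t u_xx
    by (simp add: \<Phi>_def algebra_simps)
qed

lemma KS_subst_determining_equations:
  assumes sub: "KS_subst f g h \<phi>"
  obtains \<phi>t \<phi>x \<phi>xx \<phi>w :: "real \<Rightarrow> real \<Rightarrow> real \<Rightarrow> real" where
    "\<And>t x w. ((\<lambda>s. \<phi> s x w) has_real_derivative \<phi>t t x w) (at t)"
    "\<And>t x w. ((\<lambda>s. \<phi> t s w) has_real_derivative \<phi>x t x w) (at x)"
    "\<And>t x w. ((\<lambda>s. \<phi>x t s w) has_real_derivative \<phi>xx t x w) (at x)"
    "\<And>t x w. ((\<lambda>s. \<phi> t x s) has_real_derivative \<phi>w t x w) (at w)"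
    "\<And>t x w. g w * \<phi>w t x w = - (deriv g w + h w) * \<phi> t x w"
    "\<And>t x w. \<phi>t t x w = f w * \<phi>x t x w - g w * \<phi>xx t x w"
proof -
  define \<Phi> where "\<Phi> = (\<lambda>(t, x, w). \<phi> t x w)"
  define Dx where "Dx q = frechet_derivative \<Phi> (at q) (0, 1, 0)" for q
  have s\<Phi>: "smooth_fun \<Phi>"
    using sub unfolding KS_subst_def \<Phi>_def by blast
  have sDx: "smooth_fun Dx"
    unfolding Dx_def[abs_def] using smooth_fun_frechet_derivative[OF s\<Phi>] .
  have identity: "- frechet_derivative \<Phi> (at (t, x, w)) (1, 0, 0) + f w * Dx (t, x, w)
     - g w * frechet_derivative Dx (at (t, x, w)) (0, 1, 0)
     - 4 * c * ((deriv g w + h w) * \<phi> t x w + g w * frechet_derivative \<Phi> (at (t, x, w)) (0, 0, 1)) = 0"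
    for t x w c
    using KS_subst_test_identity[OF sub] unfolding Dx_def[abs_def] \<Phi>_def .
  show thesis
  proof (rule that)
    show "((\<lambda>s. \<phi> s x w) has_real_derivative frechet_derivative \<Phi> (at (t, x, w)) (1, 0, 0)) (at t)"
      and "((\<lambda>s. \<phi> t s w) has_real_derivative Dx (t, x, w)) (at x)"
      and "((\<lambda>s. \<phi> t x s) has_real_derivative frechet_derivative \<Phi> (at (t, x, w)) (0, 0, 1)) (at w)"
      for t x w
      using DERIV_triple_axes[OF s\<Phi>] unfolding Dx_def by (simp_all add: \<Phi>_def)
    show "((\<lambda>s. Dx (t, s, w)) has_real_derivative frechet_derivative Dx (at (t, x, w)) (0, 1, 0)) (at x)"
      for t x w
      using DERIV_triple_axes(2)[OF sDx] .
    show "frechet_derivative \<Phi> (at (t, x, w)) (1, 0, 0) =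
        f w * Dx (t, x, w) - g w * frechet_derivative Dx (at (t, x, w)) (0, 1, 0)" for t x w
      using identity[of t x w 0] by simp
    then show "g w * frechet_derivative \<Phi> (at (t, x, w)) (0, 0, 1) = - (deriv g w + h w) * \<phi> t x w"
      for t x w
      using identity[of t x w 1] by (simp add: algebra_simps)
  qed
qed

end

(* The factor psi(t, x) of a substitution phi = psi(t, x) exp(-P(u)). *)

definition KS_factor :: "(real \<Rightarrow> real) \<Rightarrow> (real \<Rightarrow> real) \<Rightarrow> (real \<times> real \<Rightarrow> real) \<Rightarrow> bool" where
  "KS_factor f g \<psi> \<longleftrightarrow> smooth_fun \<psi> \<and>
     (\<forall>w q. pd True \<psi> q = f w * pd False \<psi> q - g w * pd False (pd False \<psi>) q)"

lemma KS_factor_if_separated: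
  fixes \<phi> \<phi>t \<phi>x \<phi>xx :: "real \<Rightarrow> real \<Rightarrow> real \<Rightarrow> real"
  assumes s\<psi>: "smooth_fun \<psi>" and separated: "\<And>t x w. \<phi> t x w = \<psi> (t, x) * E w"
    and d\<phi>t: "\<And>t x w. ((\<lambda>s. \<phi> s x w) has_real_derivative \<phi>t t x w) (at t)"
    and d\<phi>x: "\<And>t x w. ((\<lambda>s. \<phi> t s w) has_real_derivative \<phi>x t x w) (at x)"
    and d\<phi>xx: "\<And>t x w. ((\<lambda>s. \<phi>x t s w) has_real_derivative \<phi>xx t x w) (at x)"
    and eq_tx: "\<And>t x w. \<phi>t t x w = f w * \<phi>x t x w - g w * \<phi>xx t x w"
    and E_nonzero: "\<And>w. E w \<noteq> 0"
  shows "KS_factor f g \<psi>"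
  unfolding KS_factor_def
proof (intro conjI allI s\<psi>)
  fix w and q :: "real \<times> real"
  obtain t x where q: "q = (t, x)"
    by fastforce
  have "((\<lambda>s. \<phi> s x w) has_real_derivative pd True \<psi> (t, x) * E w) (at t)"
    using DERIV_cmult_right[OF DERIV_pd(1)[OF s\<psi>]] by (simp add: separated)
  then have \<phi>t: "\<phi>t t x w = pd True \<psi> (t, x) * E w"
    using DERIV_unique[OF d\<phi>t] by blast
  have "((\<lambda>r. \<phi> t r w) has_real_derivative pd False \<psi> (t, s) * E w) (at s)" for s
    using DERIV_cmult_right[OF DERIV_pd(2)[OF s\<psi>]] by (simp add: separated)
  then have \<phi>x: "\<phi>x t s w = pd False \<psi> (t, s) * E w" for s
    using DERIV_unique[OF d\<phi>x] by blast
  have "((\<lambda>s. \<phi>x t s w) has_real_derivative pd False (pd False \<psi>) (t, x) * E w) (at x)"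
    using DERIV_cmult_right[OF DERIV_pd(2)[OF smooth_fun_pd[OF s\<psi>]]] by (simp add: \<phi>x)
  then have \<phi>xx: "\<phi>xx t x w = pd False (pd False \<psi>) (t, x) * E w"
    using DERIV_unique[OF d\<phi>xx] by blast
  have "(pd True \<psi> q - (f w * pd False \<psi> q - g w * pd False (pd False \<psi>) q)) * E w = 0"
    using eq_tx[of t x w] unfolding q \<phi>t \<phi>x \<phi>xx by (simp add: algebra_simps)
  then show "pd True \<psi> q = f w * pd False \<psi> q - g w * pd False (pd False \<psi>) q"
    using E_nonzero by simp
qed

lemma KS_factor_const: "KS_factor f g (\<lambda>q. c)"
  by (simp add: KS_factor_def smooth_fun_const pd_const)

lemma KS_factor_travelling_wave:
  assumes sY: "smooth_fun Y" and Y_eq: "\<And>s. deriv (deriv Y) s = a * deriv Y s"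
  shows "KS_factor (\<lambda>w. a * g w + b) g (\<lambda>(t, x). Y (x + b * t))"
proof -
  have "bounded_linear (\<lambda>q :: real \<times> real. snd q + b * fst q)"
    by (intro bounded_linear_add bounded_linear_snd bounded_linear_const_mult bounded_linear_fst)
  then have "smooth_fun (\<lambda>q :: real \<times> real. Y (snd q + b * fst q))"
    by (rule smooth_fun_compose[OF sY smooth_fun_bounded_linear])
  then have smooth: "smooth_fun (\<lambda>(t, x). Y (x + b * t))"
    by (simp add: split_def)
  have dY: "(Y has_real_derivative deriv Y s) (at s)"
    and dY': "(deriv Y has_real_derivative deriv (deriv Y) s) (at s)"
    for s
    using smooth_fun_real_DERIV sY smooth_fun_deriv by blast+
  have "((\<lambda>s. Y (s + b * t)) has_real_derivative deriv Y (x + b * t)) (at x)"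
    and "((\<lambda>s. deriv Y (s + b * t)) has_real_derivative deriv (deriv Y) (x + b * t)) (at x)"
    and "((\<lambda>s. Y (x + b * s)) has_real_derivative deriv Y (x + b * t) * b) (at t)" for t x
    by (rule DERIV_cong[OF DERIV_chain2[OF dY]] DERIV_cong[OF DERIV_chain2[OF dY']],
        auto intro!: derivative_eq_intros)+
  then have pd_x: "pd False (\<lambda>(t, x). Y (x + b * t)) = (\<lambda>(t, x). deriv Y (x + b * t))"
    and pd_xx: "pd False (\<lambda>(t, x). deriv Y (x + b * t)) = (\<lambda>(t, x). deriv (deriv Y) (x + b * t))"
    and pd_t: "pd True (\<lambda>(t, x). Y (x + b * t)) = (\<lambda>(t, x). deriv Y (x + b * t) * b)"
    by (auto simp: pd_def fun_eq_iff intro!: DERIV_imp_deriv)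
  show ?thesis
    unfolding KS_factor_def pd_x pd_xx pd_t using smooth Y_eq by (simp add: split_def algebra_simps)
qed

lemma KS_factor_affine_relations:
  assumes \<psi>: "KS_factor (\<lambda>w. a * g w + b) g \<psi>" and g: "g w1 \<noteq> g w2"
  shows "pd False (pd False \<psi>) q = a * pd False \<psi> q" and "pd True \<psi> q = b * pd False \<psi> q"
proof -
  have eq: "pd True \<psi> q = (a * g w + b) * pd False \<psi> q - g w * pd False (pd False \<psi>) q" for w
    using \<psi> unfolding KS_factor_def by blast
  have "(g w1 - g w2) * (a * pd False \<psi> q - pd False (pd False \<psi>) q) = 0"
    using eq[of w1] eq[of w2] by (simp add: algebra_simps)
  then show "pd False (pd False \<psi>) q = a * pd False \<psi> q"
    using g by (metis mult_eq_0_iff right_minus_eq)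
  then show "pd True \<psi> q = b * pd False \<psi> q"
    using eq[of w1] by (simp add: algebra_simps)
qed

lemma KS_factor_nonaffine_relations:
  assumes \<psi>: "KS_factor f g \<psi>" and g: "g w1 \<noteq> g w2"
    and nonaffine: "\<not> (\<exists>a b. f = (\<lambda>w. a * g w + b))"
  shows "pd True \<psi> q = 0" and "pd False \<psi> q = 0"
proof -
  have eq: "pd True \<psi> q = f w * pd False \<psi> q - g w * pd False (pd False \<psi>) q" for w
    using \<psi> unfolding KS_factor_def by blast
  show x_zero: "pd False \<psi> q = 0"
  proof (rule ccontr)
    assume "pd False \<psi> q \<noteq> 0"
    then have "f = (\<lambda>w. (pd False (pd False \<psi>) q / pd False \<psi> q) * g w + pd True \<psi> q / pd False \<psi> q)"
      using eq by (auto simp: fun_eq_iff field_simps)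
    then show False
      using nonaffine by blast
  qed
  have "pd True \<psi> q = - g w * pd False (pd False \<psi>) q" for w
    using eq[of w] x_zero by simp
  then have "g w1 * pd False (pd False \<psi>) q = g w2 * pd False (pd False \<psi>) q"
    by (metis minus_mult_left neg_equal_iff_equal)
  then have "pd False (pd False \<psi>) q = 0"
    using g by simp
  then show "pd True \<psi> q = 0"
    using eq[of w1] x_zero by simp
qed

lemma KS_factor_affine_profile:
  assumes \<psi>: "KS_factor (\<lambda>w. a * g w + b) g \<psi>" and g: "g w1 \<noteq> g w2"
  shows "\<psi> (t, x) = \<psi> (0, x + b * t)"
    and "((\<lambda>s. \<psi> (0, s)) has_real_derivative pd False \<psi> (0, s)) (at s)"
    and "((\<lambda>s. pd False \<psi> (0, s)) has_real_derivative a * pd False \<psi> (0, s)) (at s)"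
proof -
  have s\<psi>: "smooth_fun \<psi>"
    using \<psi> unfolding KS_factor_def by blast
  show "\<psi> (t, x) = \<psi> (0, x + b * t)"
    using transport_solution[OF s\<psi>] KS_factor_affine_relations(2)[OF \<psi> g] by blast
  show "((\<lambda>s. \<psi> (0, s)) has_real_derivative pd False \<psi> (0, s)) (at s)"
    using DERIV_pd(2)[OF s\<psi>] .
  show "((\<lambda>s. pd False \<psi> (0, s)) has_real_derivative a * pd False \<psi> (0, s)) (at s)"
    using DERIV_pd(2)[OF smooth_fun_pd[OF s\<psi>, of False]] KS_factor_affine_relations(1)[OF \<psi> g]
    by simp
qed

lemma KS_factor_exp:
  "KS_factor (\<lambda>w. a * g w + b) g (\<lambda>(t, x). c1 * exp (a * x + a * b * t) + c2)"
proof -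
  define Y where "Y s = c1 * exp (a * s) + c2" for s
  have "smooth_fun (\<lambda>s::real. a * s)"
    by (intro smooth_fun_bounded_linear bounded_linear_mult_right)
  then have "smooth_fun (\<lambda>s. exp (a * s))"
    by (rule smooth_fun_compose[OF smooth_fun_exp])
  then have sY: "smooth_fun Y"
    unfolding Y_def[abs_def] by (intro smooth_fun_add smooth_fun_mult smooth_fun_const)
  have "(Y has_real_derivative c1 * a * exp (a * s)) (at s)" for s
    unfolding Y_def[abs_def] by (auto intro!: derivative_eq_intros)
  then have Y': "deriv Y = (\<lambda>s. c1 * a * exp (a * s))"
    by (simp add: DERIV_imp_deriv fun_eq_iff)
  have "((\<lambda>s. c1 * a * exp (a * s)) has_real_derivative a * (c1 * a * exp (a * s))) (at s)" for s
    by (auto intro!: derivative_eq_intros)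
  then have "deriv (deriv Y) s = a * deriv Y s" for s
    unfolding Y' by (simp add: DERIV_imp_deriv)
  moreover have "(\<lambda>(t, x). c1 * exp (a * x + a * b * t) + c2) = (\<lambda>(t, x). Y (x + b * t))"
    unfolding Y_def by (simp add: distrib_left mult.assoc)
  ultimately show ?thesis
    using KS_factor_travelling_wave[OF sY] by simp
qed

lemma KS_factor_linear: "KS_factor (\<lambda>w. b) g (\<lambda>(t, x). c3 * (x + b * t) + c4)"
proof -
  have sY: "smooth_fun (\<lambda>s. c3 * s + c4)"
    by (intro smooth_fun_add smooth_fun_const smooth_fun_bounded_linear bounded_linear_mult_right)
  have "((\<lambda>s. c3 * s + c4) has_real_derivative c3) (at s)" for s
    by (auto intro!: derivative_eq_intros)
  then have "deriv (\<lambda>s. c3 * s + c4) = (\<lambda>s. c3)"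
    by (simp add: DERIV_imp_deriv fun_eq_iff)
  then have "deriv (deriv (\<lambda>s. c3 * s + c4)) s = 0 * deriv (\<lambda>s. c3 * s + c4) s" for s
    by simp
  then show ?thesis
    using KS_factor_travelling_wave[OF sY, of 0 g b] by simp
qed

lemma KS_factor_exp_form:
  assumes \<psi>: "KS_factor (\<lambda>w. a * g w + b) g \<psi>" and g: "g w1 \<noteq> g w2" and "a \<noteq> 0"
  obtains c1 c2 where "\<psi> = (\<lambda>(t, x). c1 * exp (a * x + a * b * t) + c2)"
proof -
  define c1 where "c1 = pd False \<psi> (0, 0) / a"
  define c2 where "c2 = \<psi> (0, 0) - c1"
  have "\<psi> (t, x) = c1 * exp (a * x + a * b * t) + c2" for t x
    using KS_factor_affine_profile(1)[OF \<psi> g, of t x]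
      second_order_ode_exp_solution[OF KS_factor_affine_profile(2,3)[OF \<psi> g] \<open>a \<noteq> 0\<close>, of "x + b * t"]
    by (simp add: c1_def c2_def distrib_left mult.assoc)
  then show thesis
    by (intro that[of c1 c2]) (auto simp: fun_eq_iff)
qed

lemma KS_factor_linear_form:
  assumes \<psi>: "KS_factor (\<lambda>w. b) g \<psi>" and g: "g w1 \<noteq> g w2"
  obtains c3 c4 where "\<psi> = (\<lambda>(t, x). c3 * (x + b * t) + c4)"
proof -
  have \<psi>': "KS_factor (\<lambda>w. 0 * g w + b) g \<psi>"
    using \<psi> by simp
  have d\<psi>x: "((\<lambda>s. pd False \<psi> (0, s)) has_real_derivative 0) (at s)" for s
    using KS_factor_affine_profile(3)[OF \<psi>' g] by simp
  define c3 where "c3 = pd False \<psi> (0, 0)"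
  define c4 where "c4 = \<psi> (0, 0)"
  have "\<psi> (t, x) = c3 * (x + b * t) + c4" for t x
    using KS_factor_affine_profile(1)[OF \<psi>' g, of t x]
      second_order_ode_linear_solution[OF KS_factor_affine_profile(2)[OF \<psi>' g] d\<psi>x, of "x + b * t"]
    by (simp add: c3_def c4_def)
  then show thesis
    by (intro that[of c3 c4]) (auto simp: fun_eq_iff)
qed

lemma KS_factor_exp_iff:
  assumes g: "g w1 \<noteq> g w2" and "a \<noteq> 0"
  shows "KS_factor (\<lambda>w. a * g w + b) g \<psi> \<and> \<psi> \<noteq> (\<lambda>q. 0) \<longleftrightarrow>
    (\<exists>c1 c2. (c1, c2) \<noteq> (0, 0) \<and> \<psi> = (\<lambda>(t, x). c1 * exp (a * x + a * b * t) + c2))"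
proof -
  have "(\<lambda>(t, x). c1 * exp (a * x + a * b * t) + c2) = (\<lambda>q. 0) \<longleftrightarrow> (c1, c2) = (0, 0)" for c1 c2
  proof
    assume "(\<lambda>(t, x). c1 * exp (a * x + a * b * t) + c2) = (\<lambda>q. 0)"
    from fun_cong[OF this, of "(0, 0)"] fun_cong[OF this, of "(0, 1)"]
    have "c1 + c2 = 0" and "c1 * exp a + c2 = 0"
      by simp_all
    then have "c1 * exp a = c1 * 1" and "c2 = - c1"
      by linarith+
    then show "(c1, c2) = (0, 0)"
      using \<open>a \<noteq> 0\<close> by simp
  qed auto
  note zero_iff = this
  show ?thesis
  proof
    assume "KS_factor (\<lambda>w. a * g w + b) g \<psi> \<and> \<psi> \<noteq> (\<lambda>q. 0)"
    then have \<psi>: "KS_factor (\<lambda>w. a * g w + b) g \<psi>" and "\<psi> \<noteq> (\<lambda>q. 0)"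
      by blast+
    obtain c1 c2 where "\<psi> = (\<lambda>(t, x). c1 * exp (a * x + a * b * t) + c2)"
      by (rule KS_factor_exp_form[OF \<psi> g \<open>a \<noteq> 0\<close>])
    with \<open>\<psi> \<noteq> (\<lambda>q. 0)\<close> zero_iff
    show "\<exists>c1 c2. (c1, c2) \<noteq> (0, 0) \<and> \<psi> = (\<lambda>(t, x). c1 * exp (a * x + a * b * t) + c2)"
      by blast
  next
    assume "\<exists>c1 c2. (c1, c2) \<noteq> (0, 0) \<and> \<psi> = (\<lambda>(t, x). c1 * exp (a * x + a * b * t) + c2)"
    then obtain c1 c2 where "(c1, c2) \<noteq> (0, 0)" and "\<psi> = (\<lambda>(t, x). c1 * exp (a * x + a * b * t) + c2)"
      by blast
    then show "KS_factor (\<lambda>w. a * g w + b) g \<psi> \<and> \<psi> \<noteq> (\<lambda>q. 0)"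
      using KS_factor_exp zero_iff by simp
  qed
qed

lemma KS_factor_linear_iff:
  assumes g: "g w1 \<noteq> g w2"
  shows "KS_factor (\<lambda>w. b) g \<psi> \<and> \<psi> \<noteq> (\<lambda>q. 0) \<longleftrightarrow>
    (\<exists>c3 c4. (c3, c4) \<noteq> (0, 0) \<and> \<psi> = (\<lambda>(t, x). c3 * (x + b * t) + c4))"
proof -
  have "(\<lambda>(t, x). c3 * (x + b * t) + c4) = (\<lambda>q. 0) \<longleftrightarrow> (c3, c4) = (0, 0)" for c3 c4
  proof
    assume "(\<lambda>(t, x). c3 * (x + b * t) + c4) = (\<lambda>q. 0)"
    from fun_cong[OF this, of "(0, 0)"] fun_cong[OF this, of "(0, 1)"]
    show "(c3, c4) = (0, 0)"
      by simp
  qed auto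
  note zero_iff = this
  show ?thesis
  proof
    assume "KS_factor (\<lambda>w. b) g \<psi> \<and> \<psi> \<noteq> (\<lambda>q. 0)"
    then have \<psi>: "KS_factor (\<lambda>w. b) g \<psi>" and "\<psi> \<noteq> (\<lambda>q. 0)"
      by blast+
    obtain c3 c4 where "\<psi> = (\<lambda>(t, x). c3 * (x + b * t) + c4)"
      by (rule KS_factor_linear_form[OF \<psi> g])
    with \<open>\<psi> \<noteq> (\<lambda>q. 0)\<close> zero_iff
    show "\<exists>c3 c4. (c3, c4) \<noteq> (0, 0) \<and> \<psi> = (\<lambda>(t, x). c3 * (x + b * t) + c4)"
      by blast
  next
    assume "\<exists>c3 c4. (c3, c4) \<noteq> (0, 0) \<and> \<psi> = (\<lambda>(t, x). c3 * (x + b * t) + c4)"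
    then obtain c3 c4 where "(c3, c4) \<noteq> (0, 0)" and "\<psi> = (\<lambda>(t, x). c3 * (x + b * t) + c4)"
      by blast
    then show "KS_factor (\<lambda>w. b) g \<psi> \<and> \<psi> \<noteq> (\<lambda>q. 0)"
      using KS_factor_linear zero_iff by simp
  qed
qed

lemma KS_factor_const_iff:
  assumes g: "g w1 \<noteq> g w2" and nonaffine: "\<not> (\<exists>a b. f = (\<lambda>w. a * g w + b))"
  shows "KS_factor f g \<psi> \<and> \<psi> \<noteq> (\<lambda>q. 0) \<longleftrightarrow> (\<exists>c5. c5 \<noteq> 0 \<and> \<psi> = (\<lambda>q. c5))"
proof
  assume "KS_factor f g \<psi> \<and> \<psi> \<noteq> (\<lambda>q. 0)"
  then have \<psi>: "KS_factor f g \<psi>" and "\<psi> \<noteq> (\<lambda>q. 0)"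
    by blast+
  have s\<psi>: "smooth_fun \<psi>"
    using \<psi> unfolding KS_factor_def by blast
  note pd_zero = KS_factor_nonaffine_relations[OF \<psi> g nonaffine]
  have "\<psi> (t, x) = \<psi> (0, x)" for t x
    using transport_solution[OF s\<psi>, of 0] pd_zero by simp
  moreover have "\<psi> (0, x) = \<psi> (0, 0)" for x
    using DERIV_isconst_all[of "\<lambda>s. \<psi> (0, s)"] DERIV_pd(2)[OF s\<psi>] pd_zero by metis
  ultimately have \<psi>_constant: "\<psi> q = \<psi> (0, 0)" for q
    by (metis prod.collapse)
  obtain q0 where "\<psi> q0 \<noteq> 0"
    using \<open>\<psi> \<noteq> (\<lambda>q. 0)\<close> by (auto simp: fun_eq_iff)
  then have "\<psi> (0, 0) \<noteq> 0"
    using \<psi>_constant[of q0] by simp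
  moreover have "\<psi> = (\<lambda>q. \<psi> (0, 0))"
    using \<psi>_constant by (rule ext)
  ultimately show "\<exists>c5. c5 \<noteq> 0 \<and> \<psi> = (\<lambda>q. c5)"
    by blast
next
  assume "\<exists>c5. c5 \<noteq> 0 \<and> \<psi> = (\<lambda>q. c5)"
  then obtain c5 where "c5 \<noteq> 0" and \<psi>: "\<psi> = (\<lambda>q. c5)"
    by blast
  then have "\<psi> \<noteq> (\<lambda>q. 0)"
    by (metis (mono_tags))
  then show "KS_factor f g \<psi> \<and> \<psi> \<noteq> (\<lambda>q. 0)"
    unfolding \<psi> using KS_factor_const by blast
qed

lemma ex_reparametrize:
  "(\<exists>\<psi>. (\<exists>c1 c2. Q c1 c2 \<and> \<psi> = F c1 c2) \<and> R \<psi>) \<longleftrightarrow> (\<exists>c1 c2. Q c1 c2 \<and> R (F c1 c2))"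
  by blast

context
  fixes f g h P :: "real \<Rightarrow> real"
  assumes sf: "smooth_fun f" and sg: "smooth_fun g" and sh: "smooth_fun h"
    and g_nonzero: "\<forall>w. g w \<noteq> 0"
    and dP: "\<forall>w. (P has_real_derivative ((deriv g w + h w) / g w)) (at w)"
begin

lemma KS_weight:
  shows "smooth_fun (\<lambda>w. exp (- P w))"
    and "g w * deriv (\<lambda>w. exp (- P w)) w = - (deriv g w + h w) * exp (- P w)"
proof -
  have "smooth_fun (\<lambda>w. (deriv g w + h w) / g w)"
    by (intro smooth_fun_divide smooth_fun_add smooth_fun_deriv sg sh g_nonzero)
  then have "smooth_fun P"
    by (rule smooth_fun_real_intro[rotated]) (use dP in blast)
  then show "smooth_fun (\<lambda>w. exp (- P w))"
    by (intro smooth_fun_compose[OF smooth_fun_exp] smooth_fun_uminus)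
  have "((\<lambda>w. exp (- P w)) has_real_derivative - ((deriv g w + h w) / g w) * exp (- P w)) (at w)"
    using dP by (auto intro!: derivative_eq_intros)
  then have "deriv (\<lambda>w. exp (- P w)) w = - ((deriv g w + h w) / g w) * exp (- P w)"
    by (rule DERIV_imp_deriv)
  then show "g w * deriv (\<lambda>w. exp (- P w)) w = - (deriv g w + h w) * exp (- P w)"
    using g_nonzero by (simp; simp add: algebra_simps)
qed

lemma KS_subst_if_factor:
  assumes \<psi>: "KS_factor f g \<psi>" and \<psi>_nonzero: "\<psi> \<noteq> (\<lambda>q. 0)"
  shows "KS_subst f g h (\<lambda>t x w. \<psi> (t, x) * exp (- P w))"
proof -
  have s\<psi>: "smooth_fun \<psi>"
    and \<psi>_eq: "\<And>w q. pd True \<psi> q = f w * pd False \<psi> q - g w * pd False (pd False \<psi>) q"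
    using \<psi> unfolding KS_factor_def by blast+
  obtain q where "\<psi> q \<noteq> 0"
    using \<psi>_nonzero by (auto simp: fun_eq_iff)
  then have nonzero: "(\<lambda>t x w. \<psi> (t, x) * exp (- P w)) \<noteq> (\<lambda>t x w. 0)"
    by (metis exp_not_eq_zero mult_eq_0_iff prod.collapse)
  have "euler_u (KS_lag f g h) u (\<lambda>q. \<psi> q * exp (- P (u q))) p =
      - \<psi> p * deriv (\<lambda>w. exp (- P w)) (jet u p []) * KS f g h (jet2 u (\<lambda>q. \<psi> q * exp (- P (u q))) p)"
    if "smooth_fun u" for u p
    using euler_u_KS_lag_factor[OF sf sg sh KS_weight s\<psi> \<psi>_eq that] by (simp add: jet_def)
  then show ?thesis
    unfolding KS_subst_def using smooth_fun_separated[OF s\<psi> KS_weight(1)] nonzero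
    by (intro conjI exI[of _ "\<lambda>t x j. - \<psi> (t, x) * deriv (\<lambda>w. exp (- P w)) (j [])"]) simp_all
qed

lemma KS_subst_imp_factor:
  assumes sub: "KS_subst f g h \<phi>"
  obtains \<psi> where "KS_factor f g \<psi>" and "\<psi> \<noteq> (\<lambda>q. 0)"
    and "\<phi> = (\<lambda>t x w. \<psi> (t, x) * exp (- P w))"
proof -
  obtain \<phi>t \<phi>x \<phi>xx \<phi>w where
    d\<phi>t: "\<And>t x w. ((\<lambda>s. \<phi> s x w) has_real_derivative \<phi>t t x w) (at t)" and
    d\<phi>x: "\<And>t x w. ((\<lambda>s. \<phi> t s w) has_real_derivative \<phi>x t x w) (at x)" and
    d\<phi>xx: "\<And>t x w. ((\<lambda>s. \<phi>x t s w) has_real_derivative \<phi>xx t x w) (at x)" and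
    d\<phi>w: "\<And>t x w. ((\<lambda>s. \<phi> t x s) has_real_derivative \<phi>w t x w) (at w)" and
    eq_w: "\<And>t x w. g w * \<phi>w t x w = - (deriv g w + h w) * \<phi> t x w" and
    eq_tx: "\<And>t x w. \<phi>t t x w = f w * \<phi>x t x w - g w * \<phi>xx t x w"
    using KS_subst_determining_equations[OF sf sg sh sub] by blast
  define \<psi> where "\<psi> q = \<phi> (fst q) (snd q) 0 * exp (P 0)" for q
  have separated: "\<phi> t x w = \<psi> (t, x) * exp (- P w)" for t x w
  proof -
    have "\<phi>w t x s = - ((deriv g s + h s) / g s) * \<phi> t x s" for s
      using eq_w[of s t x] g_nonzero by (simp add: field_simps)
    then have "((\<lambda>s. \<phi> t x s) has_real_derivative - ((deriv g s + h s) / g s) * \<phi> t x s) (at s)" for s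
      using d\<phi>w[of t x s] by simp
    moreover have "((\<lambda>s. - P s) has_real_derivative - ((deriv g s + h s) / g s)) (at s)" for s
      using dP by (auto intro!: derivative_eq_intros)
    ultimately have "\<phi> t x w = \<phi> t x 0 * exp (- P w - - P 0)"
      by (rule linear_ode_solution)
    then show ?thesis
      by (simp add: \<psi>_def exp_add[symmetric])
  qed
  have L: "bounded_linear (\<lambda>q :: real \<times> real. (fst q, snd q, 0 :: real))"
    by (intro bounded_linear_Pair bounded_linear_fst bounded_linear_snd bounded_linear_zero)
  have "smooth_fun (\<lambda>q. (\<lambda>(t, x, w). \<phi> t x w) (fst q, snd q, 0))"
    by (rule smooth_fun_compose_bounded_linear[OF _ L]) (use sub in \<open>simp add: KS_subst_def\<close>)
  then have "smooth_fun \<psi>"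
    unfolding \<psi>_def[abs_def] by (simp add: smooth_fun_mult[OF _ smooth_fun_const])
  then have "KS_factor f g \<psi>"
    using separated d\<phi>t d\<phi>x d\<phi>xx eq_tx by (rule KS_factor_if_separated) simp
  moreover have "\<phi> = (\<lambda>t x w. \<psi> (t, x) * exp (- P w))"
    using separated by (simp add: fun_eq_iff)
  moreover from this have "\<psi> \<noteq> (\<lambda>q. 0)"
    using sub unfolding KS_subst_def by auto
  ultimately show thesis
    using that by blast
qed

lemma KS_subst_iff_factor:
  "KS_subst f g h \<phi> \<longleftrightarrow>
     (\<exists>\<psi>. (KS_factor f g \<psi> \<and> \<psi> \<noteq> (\<lambda>q. 0)) \<and> \<phi> = (\<lambda>t x w. \<psi> (t, x) * exp (- P w)))"
  using KS_subst_if_factor KS_subst_imp_factor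
  by metis

context
  fixes w1 w2 :: real
  assumes g_nonconstant: "g w1 \<noteq> g w2"
begin

lemma KS_subst_exp_iff:
  assumes "f = (\<lambda>w. a * g w + b)" and "a \<noteq> 0"
  shows "KS_subst f g h \<phi> \<longleftrightarrow> (\<exists>c1 c2. (c1, c2) \<noteq> (0, 0) \<and>
    \<phi> = (\<lambda>t x w. (c1 * exp (a * x + a * b * t) + c2) * exp (- P w)))"
  unfolding KS_subst_iff_factor
  unfolding assms(1) KS_factor_exp_iff[of g w1 w2, OF g_nonconstant \<open>a \<noteq> 0\<close>] ex_reparametrize
  by simp

lemma KS_subst_linear_iff:
  assumes "f = (\<lambda>w. b)"
  shows "KS_subst f g h \<phi> \<longleftrightarrow> (\<exists>c3 c4. (c3, c4) \<noteq> (0, 0) \<and>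
    \<phi> = (\<lambda>t x w. (c3 * (x + b * t) + c4) * exp (- P w)))"
  unfolding KS_subst_iff_factor
  unfolding assms(1) KS_factor_linear_iff[of g w1 w2, OF g_nonconstant] ex_reparametrize
  by simp

lemma KS_subst_const_iff:
  assumes "\<not> (\<exists>a b. f = (\<lambda>w. a * g w + b))"
  shows "KS_subst f g h \<phi> \<longleftrightarrow> (\<exists>c5. c5 \<noteq> 0 \<and> \<phi> = (\<lambda>t x w. c5 * exp (- P w)))"
  unfolding KS_subst_iff_factor KS_factor_const_iff[of g w1 w2, OF g_nonconstant assms]
  by auto

end

end

theorem theorem1:
  fixes f g h :: "real \<Rightarrow> real"
  assumes "smooth_fun f" and "smooth_fun g" and "smooth_fun h"
    and "f \<noteq> (\<lambda>w. 0)"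
    and "\<forall>w. g w \<noteq> 0"
    and "deriv g \<noteq> (\<lambda>w. 0)"
  shows "KS_nonlin_self_adjoint f g h \<and>
    (\<forall>P. (\<forall>w. (P has_real_derivative ((deriv g w + h w) / g w)) (at w)) \<longrightarrow>
       (\<forall>a b. f = (\<lambda>w. a * g w + b) \<and> \<not> (\<exists>c. f = (\<lambda>w. c)) \<longrightarrow>
          (\<forall>\<phi>. KS_subst f g h \<phi> \<longleftrightarrow>
             (\<exists>c1 c2. (c1, c2) \<noteq> (0, 0) \<and>
                \<phi> = (\<lambda>t x w. (c1 * exp (a * x + a * b * t) + c2) * exp (- P w))))) \<and>
       (\<forall>b. f = (\<lambda>w. b) \<longrightarrow>
          (\<forall>\<phi>. KS_subst f g h \<phi> \<longleftrightarrow>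
             (\<exists>c3 c4. (c3, c4) \<noteq> (0, 0) \<and>
                \<phi> = (\<lambda>t x w. (c3 * (x + b * t) + c4) * exp (- P w))))) \<and>
       (\<not> (\<exists>a b. f = (\<lambda>w. a * g w + b)) \<longrightarrow>
          (\<forall>\<phi>. KS_subst f g h \<phi> \<longleftrightarrow>
             (\<exists>c5. c5 \<noteq> 0 \<and> \<phi> = (\<lambda>t x w. c5 * exp (- P w))))))"
proof -
  note smooth = assms(1-3) and g_nonzero = assms(5)
  obtain w1 w2 where g_nonconstant: "g w1 \<noteq> g w2"
    using nonconstant_if_deriv_nonzero[OF assms(6)] .
  have "smooth_fun (\<lambda>w. (deriv g w + h w) / g w)"
    by (intro smooth_fun_divide smooth_fun_add smooth_fun_deriv smooth g_nonzero)
  then have "isCont (\<lambda>w. (deriv g w + h w) / g w) w" for w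
    by (intro differentiable_imp_continuous_within smooth_fun_differentiable)
  then obtain P0 where "\<And>w. (P0 has_real_derivative (deriv g w + h w) / g w) (at w)"
    using antiderivative_exists by blast
  then have "KS_subst f g h (\<lambda>t x w. (\<lambda>q. 1) (t, x) * exp (- P0 w))"
    using smooth g_nonzero by (intro KS_subst_if_factor) (auto simp: KS_factor_const fun_eq_iff)
  then have self_adjoint: "KS_nonlin_self_adjoint f g h"
    unfolding KS_nonlin_self_adjoint_def by blast
  show ?thesis
    apply (intro conjI allI impI)
    subgoal
      by (rule self_adjoint)
    subgoal for P a b \<phi>
      by (rule KS_subst_exp_iff[OF smooth g_nonzero _ g_nonconstant]) auto
    subgoal for P b \<phi>
      by (rule KS_subst_linear_iff[OF smooth g_nonzero _ g_nonconstant])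
    subgoal for P \<phi>
      by (rule KS_subst_const_iff[OF smooth g_nonzero _ g_nonconstant])
    done
qed

end
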